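(* For the semi-discretization described below, choose $$f^\rho=\{\{\rho\}\}_{\log}\{\{v\}\},\qquad f^{\rho v}=\{\{v\}\}f^\rho+\{\{p\}\},\qquad f^{\rho e}=\frac{1}{\gamma-1}\frac{f^\rho}{\{\{\rho/p\}\}_{\log}}+\{\{v\}\}\{\{p\}\},\qquad v^{\mathrm{num}}=\{\{v\}\},$$ and any consistent $\rho^{\mathrm{num}}$. Then the semi-discretization is entropy-conservative for the entropy pair $U=-\rho s$, $F=-\rho sv$ with $s=\log(p/\rho^\gamma)$. If in addition $\rho^{\mathrm{num}}=\{\{\rho\}\}_{\log}$, the semi-discretization also conserves the total energy $\rho e+\tfrac12\rho v^2+\rho\phi$ (entropy-conservative for the pair $(\rho e+\tfrac12\rho v^2+\rho\phi,\ (\rho e+\tfrac12\rho v^2+\rho\phi+p)v)$).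
   Context: Let $\gamma>1$. States $(\rho,\rho v,\rho e)$ with $\rho>0$, $p=(\gamma-1)\rho e>0$, $v=\rho v/\rho$, and a time-independent gravity potential $\phi_i$ attached to each cell (treated as an extra state component). The scheme is $\partial_t\rho_i+\frac{f^\rho_{i+1/2}-f^\rho_{i-1/2}}{\Delta x}=0$, $\partial_t(\rho v)_i+\frac{f^{\rho v}_{i+1/2}-f^{\rho v}_{i-1/2}}{\Delta x}+\frac{\rho^{\mathrm{num}}_{i+1/2}[\![\phi]\!]_{i+1/2}+\rho^{\mathrm{num}}_{i-1/2}[\![\phi]\!]_{i-1/2}}{2\Delta x}=0$, $\partial_t(\rho e)_i+\frac{f^{\rho e}_{i+1/2}-f^{\rho e}_{i-1/2}}{\Delta x}-\frac{v^{\mathrm{num}}_{i+1/2}[\![p]\!]_{i+1/2}+v^{\mathrm{num}}_{i-1/2}[\![p]\!]_{i-1/2}}{2\Delta x}=0$, with subscript $i+1/2$ meaning evaluation at $(u_i,u_{i+1})$. Notation: $\{\{a\}\}=\tfrac12(a_-+a_+)$, $[\![a]\!]=a_+-a_-$, and for positive $a$ the logarithmic mean $\{\{a\}\}_{\log}=[\![a]\!]/[\![\log a]\!]$ if $a_-\ne a_+$ and $=a_-$ otherwise. Entropy-conservative for $(U,F)$ means: there exists a two-point $F^{\mathrm{num}}$ with $F^{\mathrm{num}}(u,u)=F(u)$ such that for all grid states and all $i$, $U'(u_i)\cdot\partial_tu_i=-\frac{1}{\Delta x}(F^{\mathrm{num}}(u_i,u_{i+1})-F^{\mathrm{num}}(u_{i-1},u_i))$,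 where $U'$ is the gradient with respect to $(\rho,\rho v,\rho e)$ (with $\phi$ held fixed). *)

theory Defs
  imports "HOL-Analysis.Analysis"
begin

text \<open>A cell state is ((rho, rho v, rho e), phi): the three conserved variables
  together with the (time-independent) gravity potential phi.\<close>
type_synonym cstate = "(real \<times> real \<times> real) \<times> real"

definition rho :: "cstate \<Rightarrow> real" where
  "rho u = fst (fst u)"
definition mom :: "cstate \<Rightarrow> real" where
  "mom u = fst (snd (fst u))"
definition ien :: "cstate \<Rightarrow> real" where   \<comment> \<open>rho e\<close>
  "ien u = snd (snd (fst u))"
definition pot :: "cstate \<Rightarrow> real" where
  "pot u = snd u"
definition vel :: "cstate \<Rightarrow> real" where
  "vel u = mom u / rho u"
definition pres :: "real \<Rightarrow> cstate \<Rightarrow> real" where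
  "pres \<gamma> u = (\<gamma> - 1) * ien u"

definition admissible :: "real \<Rightarrow> cstate \<Rightarrow> bool" where
  "admissible \<gamma> u \<longleftrightarrow> rho u > 0 \<and> pres \<gamma> u > 0"

definition amean :: "real \<Rightarrow> real \<Rightarrow> real" where
  "amean a b = (a + b) / 2"
definition logmean :: "real \<Rightarrow> real \<Rightarrow> real" where
  "logmean a b = (if a = b then a else (b - a) / (ln b - ln a))"

text \<open>The semi-discretization: time derivative of (rho, rho v, rho e) in cell i,
  given two-point fluxes fr, fm, fe and two-point functions rnum, vnum.\<close>
definition semidisc ::
  "real \<Rightarrow> real \<Rightarrow> (cstate \<Rightarrow> cstate \<Rightarrow> real) \<Rightarrow> (cstate \<Rightarrow> cstate \<Rightarrow> real)
   \<Rightarrow> (cstate \<Rightarrow> cstate \<Rightarrow> real) \<Rightarrow> (cstate \<Rightarrow> cstate \<Rightarrow> real) \<Rightarrow> (cstate \<Rightarrow> cstate \<Rightarrow> real)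
   \<Rightarrow> (int \<Rightarrow> cstate) \<Rightarrow> int \<Rightarrow> real \<times> real \<times> real" where
  "semidisc \<gamma> dx fr fm fe rnum vnum u i =
    ( - (fr (u i) (u (i+1)) - fr (u (i-1)) (u i)) / dx,
      - (fm (u i) (u (i+1)) - fm (u (i-1)) (u i)) / dx
        - (rnum (u i) (u (i+1)) * (pot (u (i+1)) - pot (u i))
           + rnum (u (i-1)) (u i) * (pot (u i) - pot (u (i-1)))) / (2 * dx),
      - (fe (u i) (u (i+1)) - fe (u (i-1)) (u i)) / dx
        + (vnum (u i) (u (i+1)) * (pres \<gamma> (u (i+1)) - pres \<gamma> (u i))
           + vnum (u (i-1)) (u i) * (pres \<gamma> (u i) - pres \<gamma> (u (i-1)))) / (2 * dx))"

text \<open>Entropy conservation for the pair (U, F): there is a consistent two-point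
  numerical flux Fnum such that for every admissible grid state and every cell i,
  U'(u_i) \<bullet> d/dt u_i = -(Fnum(u_i,u_{i+1}) - Fnum(u_{i-1},u_i))/dx, where U'(u_i)
  is the gradient of U w.r.t. (rho, rho v, rho e) with phi held fixed.\<close>
definition entropy_conservative ::
  "real \<Rightarrow> real \<Rightarrow> ((int \<Rightarrow> cstate) \<Rightarrow> int \<Rightarrow> real \<times> real \<times> real)
   \<Rightarrow> (cstate \<Rightarrow> real) \<Rightarrow> (cstate \<Rightarrow> real) \<Rightarrow> bool" where
  "entropy_conservative \<gamma> dx rhs U F \<longleftrightarrow>
    (\<exists>Fnum :: cstate \<Rightarrow> cstate \<Rightarrow> real.
       (\<forall>u. admissible \<gamma> u \<longrightarrow> Fnum u u = F u) \<and>
       (\<forall>u :: int \<Rightarrow> cstate. (\<forall>j. admissible \<gamma> (u j)) \<longrightarrow>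
          (\<forall>i. \<exists>g. ((\<lambda>w. U (w, pot (u i))) has_derivative (\<lambda>h. g \<bullet> h)) (at (fst (u i)))
                  \<and> g \<bullet> rhs u i = - (Fnum (u i) (u (i+1)) - Fnum (u (i-1)) (u i)) / dx)))"

definition f_rho :: "cstate \<Rightarrow> cstate \<Rightarrow> real" where
  "f_rho a b = logmean (rho a) (rho b) * amean (vel a) (vel b)"
definition f_mom :: "real \<Rightarrow> cstate \<Rightarrow> cstate \<Rightarrow> real" where
  "f_mom \<gamma> a b = amean (vel a) (vel b) * f_rho a b + amean (pres \<gamma> a) (pres \<gamma> b)"
definition f_ien :: "real \<Rightarrow> cstate \<Rightarrow> cstate \<Rightarrow> real" where
  "f_ien \<gamma> a b = 1 / (\<gamma> - 1) * f_rho a b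
        / logmean (rho a / pres \<gamma> a) (rho b / pres \<gamma> b)
      + amean (vel a) (vel b) * amean (pres \<gamma> a) (pres \<gamma> b)"
definition v_num :: "cstate \<Rightarrow> cstate \<Rightarrow> real" where
  "v_num a b = amean (vel a) (vel b)"

definition spec_ent :: "real \<Rightarrow> cstate \<Rightarrow> real" where
  "spec_ent \<gamma> u = ln (pres \<gamma> u / rho u powr \<gamma>)"
definition U_ent :: "real \<Rightarrow> cstate \<Rightarrow> real" where
  "U_ent \<gamma> u = - rho u * spec_ent \<gamma> u"
definition F_ent :: "real \<Rightarrow> cstate \<Rightarrow> real" where
  "F_ent \<gamma> u = - rho u * spec_ent \<gamma> u * vel u"

definition U_tot :: "cstate \<Rightarrow> real" where
  "U_tot u = ien u + rho u * (vel u)\<^sup>2 / 2 + rho u * pot u"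
definition F_tot :: "real \<Rightarrow> cstate \<Rightarrow> real" where
  "F_tot \<gamma> u = (U_tot u + pres \<gamma> u) * vel u"

end

(* Each cell takes half of the non-conservative source terms at each of its two interfaces,
   so the scheme is a difference of interface fluxes that depend on the side of the interface
   (f_L = left_cell_flux, f_R = right_cell_flux). Tadmor's argument carries over: with entropy variables w = U' and a
   potential psi, the scheme is entropy conservative as soon as
   w(a) . f_L(a,b) - psi(a) = w(b) . f_R(a,b) - psi(b), the common value being the numerical
   entropy flux. For U = -rho s we have psi = 0 and w has no momentum entry, so rho^num plays
   no role; the identity follows from {{a}}_log [[log a]] = [[a]] for a = rho and a = rho/p
   together with the product rule [[rho]] = [[rho/p]] {{p}} + {{rho/p}} [[p]]. For the total
   energy, w = (phi - v^2/2, v, 1) and psi = p v, and once rho^num = {{rho}}_log the identity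
   is a polynomial one. *)
theory Submission
  imports Defs
begin

lemma logmean_pos:
  assumes "a > 0" "b > 0"
  shows "logmean a b > 0"
  using assms by (cases "a < b") (auto simp: logmean_def zero_less_divide_iff)

lemma logmean_mult_ln_diff:
  assumes "a > 0" "b > 0"
  shows "logmean a b * (ln b - ln a) = b - a"
  using assms by (auto simp: logmean_def)

definition left_cell_flux ::
  "real \<Rightarrow> (cstate \<Rightarrow> cstate \<Rightarrow> real) \<Rightarrow> (cstate \<Rightarrow> cstate \<Rightarrow> real)
   \<Rightarrow> (cstate \<Rightarrow> cstate \<Rightarrow> real) \<Rightarrow> (cstate \<Rightarrow> cstate \<Rightarrow> real) \<Rightarrow> (cstate \<Rightarrow> cstate \<Rightarrow> real)
   \<Rightarrow> cstate \<Rightarrow> cstate \<Rightarrow> real \<times> real \<times> real" where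
  "left_cell_flux \<gamma> fr fm fe rnum vnum a b =
    (fr a b, fm a b + rnum a b * (pot b - pot a) / 2, fe a b - vnum a b * (pres \<gamma> b - pres \<gamma> a) / 2)"

definition right_cell_flux ::
  "real \<Rightarrow> (cstate \<Rightarrow> cstate \<Rightarrow> real) \<Rightarrow> (cstate \<Rightarrow> cstate \<Rightarrow> real)
   \<Rightarrow> (cstate \<Rightarrow> cstate \<Rightarrow> real) \<Rightarrow> (cstate \<Rightarrow> cstate \<Rightarrow> real) \<Rightarrow> (cstate \<Rightarrow> cstate \<Rightarrow> real)
   \<Rightarrow> cstate \<Rightarrow> cstate \<Rightarrow> real \<times> real \<times> real" where
  "right_cell_flux \<gamma> fr fm fe rnum vnum a b =
    (fr a b, fm a b - rnum a b * (pot b - pot a) / 2, fe a b + vnum a b * (pres \<gamma> b - pres \<gamma> a) / 2)"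

lemma semidisc_eq_flux_difference:
  "semidisc \<gamma> dx fr fm fe rnum vnum u i =
    - (1 / dx) *\<^sub>R (left_cell_flux \<gamma> fr fm fe rnum vnum (u i) (u (i + 1))
                   - right_cell_flux \<gamma> fr fm fe rnum vnum (u (i - 1)) (u i))"
  by (cases "dx = 0") (simp_all add: semidisc_def left_cell_flux_def right_cell_flux_def field_simps)

lemma left_cell_flux_diag:
  assumes "admissible \<gamma> a" "\<gamma> \<noteq> 1"
  shows "left_cell_flux \<gamma> f_rho (f_mom \<gamma>) (f_ien \<gamma>) rnum v_num a a
    = (rho a * vel a, rho a * (vel a)\<^sup>2 + pres \<gamma> a, (ien a + pres \<gamma> a) * vel a)"
  using assms
  by (simp add: left_cell_flux_def f_mom_def f_ien_def f_rho_def v_num_def amean_def logmean_def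
      admissible_def pres_def power2_eq_square field_simps)

lemma entropy_conservativeI:
  fixes \<gamma> :: real and fr fm fe rnum vnum :: "cstate \<Rightarrow> cstate \<Rightarrow> real"
    and w :: "cstate \<Rightarrow> real \<times> real \<times> real" and \<psi> :: "cstate \<Rightarrow> real"
  defines "Fnum a b \<equiv> w a \<bullet> left_cell_flux \<gamma> fr fm fe rnum vnum a b - \<psi> a"
  assumes gradient: "\<And>a. admissible \<gamma> a \<Longrightarrow>
      ((\<lambda>x. U (x, pot a)) has_derivative (\<lambda>h. w a \<bullet> h)) (at (fst a))"
    and balance: "\<And>a b. admissible \<gamma> a \<Longrightarrow> admissible \<gamma> b \<Longrightarrow>
      Fnum a b = w b \<bullet> right_cell_flux \<gamma> fr fm fe rnum vnum a b - \<psi> b"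
    and consistent: "\<And>a. admissible \<gamma> a \<Longrightarrow> Fnum a a = F a"
  shows "entropy_conservative \<gamma> dx (semidisc \<gamma> dx fr fm fe rnum vnum) U F"
  unfolding entropy_conservative_def
proof (intro exI[of _ Fnum] conjI allI impI)
  fix u :: "int \<Rightarrow> cstate" and i :: int
  assume adm: "\<forall>j. admissible \<gamma> (u j)"
  have "w (u i) \<bullet> semidisc \<gamma> dx fr fm fe rnum vnum u i
      = - (1 / dx) * ((Fnum (u i) (u (i + 1)) + \<psi> (u i)) - (Fnum (u (i - 1)) (u i) + \<psi> (u i)))"
    using balance[of "u (i - 1)" "u i"] adm
    by (simp add: semidisc_eq_flux_difference inner_diff_right Fnum_def)
  also have "\<dots> = - (Fnum (u i) (u (i + 1)) - Fnum (u (i - 1)) (u i)) / dx"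
    by (simp add: field_split_simps)
  finally show "\<exists>g. ((\<lambda>x. U (x, pot (u i))) has_derivative (\<lambda>h. g \<bullet> h)) (at (fst (u i)))
      \<and> g \<bullet> semidisc \<gamma> dx fr fm fe rnum vnum u i = - (Fnum (u i) (u (i + 1)) - Fnum (u (i - 1)) (u i)) / dx"
    using gradient adm by blast
qed (use consistent in auto)

lemma spec_ent_eq:
  assumes "admissible \<gamma> a"
  shows "spec_ent \<gamma> a = - ln (rho a / pres \<gamma> a) - (\<gamma> - 1) * ln (rho a)"
  using assms by (simp add: spec_ent_def admissible_def ln_div ln_powr algebra_simps)

definition entropy_vars :: "real \<Rightarrow> cstate \<Rightarrow> real \<times> real \<times> real" where
  "entropy_vars \<gamma> a = (\<gamma> - spec_ent \<gamma> a, 0, - (\<gamma> - 1) * rho a / pres \<gamma> a)"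

lemma U_ent_has_derivative:
  assumes "admissible \<gamma> a"
  shows "((\<lambda>x. U_ent \<gamma> (x, pot a)) has_derivative (\<lambda>h. entropy_vars \<gamma> a \<bullet> h)) (at (fst a))"
proof -
  obtain r m e \<phi> where a: "a = ((r, m, e), \<phi>)"
    by (metis prod.exhaust)
  have "r > 0" "(\<gamma> - 1) * e > 0"
    using assms by (auto simp: a admissible_def rho_def pres_def ien_def)
  moreover have "\<gamma> * e - e \<noteq> 0" "e \<noteq> 0"
    using \<open>(\<gamma> - 1) * e > 0\<close> by (auto simp: algebra_simps)
  ultimately have "((\<lambda>x. - fst x * ln ((\<gamma> - 1) * snd (snd x) / fst x powr \<gamma>)) has_derivative
      (\<lambda>h. (\<gamma> - ln ((\<gamma> - 1) * e / r powr \<gamma>), 0, - (\<gamma> - 1) * r / ((\<gamma> - 1) * e)) \<bullet> h)) (at (r, m, e))"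
    by (auto intro!: derivative_eq_intros ext simp: field_simps zero_less_mult_iff)
  then show ?thesis
    by (simp add: a U_ent_def entropy_vars_def spec_ent_def pres_def rho_def ien_def)
qed

lemma f_rho_mult_ln_diff:
  assumes "rho a > 0" "rho b > 0"
  shows "f_rho a b * (ln (rho b) - ln (rho a)) = (rho b - rho a) * amean (vel a) (vel b)"
  using logmean_mult_ln_diff[OF assms] by (simp add: f_rho_def)

lemma f_ien_mult_jump:
  fixes \<gamma> :: real
  defines "\<beta> \<equiv> \<lambda>x. rho x / pres \<gamma> x"
  assumes "\<gamma> \<noteq> 1" "admissible \<gamma> a" "admissible \<gamma> b"
  shows "(\<gamma> - 1) * (\<beta> b - \<beta> a) * f_ien \<gamma> a b
    = f_rho a b * (ln (\<beta> b) - ln (\<beta> a))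
      + (\<gamma> - 1) * (\<beta> b - \<beta> a) * amean (vel a) (vel b) * amean (pres \<gamma> a) (pres \<gamma> b)"
proof -
  define M where "M = logmean (\<beta> a) (\<beta> b)"
  have pos: "\<beta> a > 0" "\<beta> b > 0"
    using assms(3,4) by (auto simp: admissible_def \<beta>_def)
  have M: "M * (ln (\<beta> b) - ln (\<beta> a)) = \<beta> b - \<beta> a" "M \<noteq> 0"
    using logmean_mult_ln_diff[OF pos] logmean_pos[OF pos] by (auto simp: M_def)
  have flux: "(\<gamma> - 1) * M * f_ien \<gamma> a b
      = f_rho a b + (\<gamma> - 1) * M * amean (vel a) (vel b) * amean (pres \<gamma> a) (pres \<gamma> b)"
    using assms(2) M(2) by (simp add: f_ien_def M_def \<beta>_def field_simps)
  have "(\<gamma> - 1) * (\<beta> b - \<beta> a) * f_ien \<gamma> a b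
      = (ln (\<beta> b) - ln (\<beta> a)) * ((\<gamma> - 1) * M * f_ien \<gamma> a b)"
    unfolding M(1)[symmetric] by (simp add: algebra_simps)
  also have "\<dots> = f_rho a b * (ln (\<beta> b) - ln (\<beta> a))
      + (\<gamma> - 1) * (\<beta> b - \<beta> a) * amean (vel a) (vel b) * amean (pres \<gamma> a) (pres \<gamma> b)"
    unfolding flux M(1)[symmetric] by (simp add: algebra_simps)
  finally show ?thesis .
qed

lemma entropy_vars_flux_balance:
  assumes "\<gamma> \<noteq> 1" "admissible \<gamma> a" "admissible \<gamma> b"
  shows "entropy_vars \<gamma> a \<bullet> left_cell_flux \<gamma> f_rho (f_mom \<gamma>) (f_ien \<gamma>) rnum v_num a b
       = entropy_vars \<gamma> b \<bullet> right_cell_flux \<gamma> f_rho (f_mom \<gamma>) (f_ien \<gamma>) rnum v_num a b"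
proof -
  define \<beta> where "\<beta> x = rho x / pres \<gamma> x" for x
  define v p where "v = amean (vel a) (vel b)" and "p = amean (pres \<gamma> a) (pres \<gamma> b)"
  have mass: "f_rho a b * (ln (rho b) - ln (rho a)) = (rho b - rho a) * v"
    using assms(2,3) f_rho_mult_ln_diff by (auto simp: admissible_def v_def)
  have energy: "(\<gamma> - 1) * (\<beta> b - \<beta> a) * f_ien \<gamma> a b
      = f_rho a b * (ln (\<beta> b) - ln (\<beta> a)) + (\<gamma> - 1) * (\<beta> b - \<beta> a) * v * p"
    using f_ien_mult_jump[OF assms] by (simp only: \<beta>_def v_def p_def)
  have product_rule: "rho b - rho a = (\<beta> b - \<beta> a) * p + amean (\<beta> a) (\<beta> b) * (pres \<gamma> b - pres \<gamma> a)"
    using assms(2,3) by (simp add: \<beta>_def p_def amean_def admissible_def field_simps)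
  have entropy_jump: "spec_ent \<gamma> b - spec_ent \<gamma> a
      = - (ln (\<beta> b) - ln (\<beta> a)) - (\<gamma> - 1) * (ln (rho b) - ln (rho a))"
    using assms(2,3) by (simp add: spec_ent_eq \<beta>_def algebra_simps)
  have "entropy_vars \<gamma> a \<bullet> left_cell_flux \<gamma> f_rho (f_mom \<gamma>) (f_ien \<gamma>) rnum v_num a b
      - entropy_vars \<gamma> b \<bullet> right_cell_flux \<gamma> f_rho (f_mom \<gamma>) (f_ien \<gamma>) rnum v_num a b
      = (spec_ent \<gamma> b - spec_ent \<gamma> a) * f_rho a b
        + (\<gamma> - 1) * (\<beta> b - \<beta> a) * f_ien \<gamma> a b
        + (\<gamma> - 1) * v * (pres \<gamma> b - pres \<gamma> a) * amean (\<beta> a) (\<beta> b)"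
    by (simp add: entropy_vars_def left_cell_flux_def right_cell_flux_def v_num_def v_def \<beta>_def
        amean_def algebra_simps add_divide_distrib diff_divide_distrib)
  also have "\<dots> = (\<gamma> - 1) * v * ((\<beta> b - \<beta> a) * p + amean (\<beta> a) (\<beta> b) * (pres \<gamma> b - pres \<gamma> a))
      - (\<gamma> - 1) * (f_rho a b * (ln (rho b) - ln (rho a)))"
    unfolding entropy_jump energy by (simp add: algebra_simps)
  also have "\<dots> = 0"
    unfolding mass product_rule[symmetric] by (simp add: algebra_simps)
  finally show ?thesis
    by simp
qed

lemma entropy_vars_inner_physical_flux:
  assumes "\<gamma> \<noteq> 1" "admissible \<gamma> a"
  shows "entropy_vars \<gamma> a \<bullet> left_cell_flux \<gamma> f_rho (f_mom \<gamma>) (f_ien \<gamma>) rnum v_num a a = F_ent \<gamma> a"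
proof -
  have p: "pres \<gamma> a \<noteq> 0" and internal: "(\<gamma> - 1) * (ien a + pres \<gamma> a) = \<gamma> * pres \<gamma> a"
    using assms(2) by (auto simp: admissible_def pres_def algebra_simps)
  have "entropy_vars \<gamma> a \<bullet> left_cell_flux \<gamma> f_rho (f_mom \<gamma>) (f_ien \<gamma>) rnum v_num a a
      = (\<gamma> - spec_ent \<gamma> a) * (rho a * vel a) - rho a * vel a / pres \<gamma> a * ((\<gamma> - 1) * (ien a + pres \<gamma> a))"
    using assms p by (simp add: left_cell_flux_diag entropy_vars_def field_simps)
  also have "\<dots> = F_ent \<gamma> a"
    unfolding internal using p by (simp add: F_ent_def algebra_simps)
  finally show ?thesis .
qed

definition energy_vars :: "cstate \<Rightarrow> real \<times> real \<times> real" where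
  "energy_vars a = (pot a - (vel a)\<^sup>2 / 2, vel a, 1)"

lemma U_tot_has_derivative:
  assumes "rho a \<noteq> 0"
  shows "((\<lambda>x. U_tot (x, pot a)) has_derivative (\<lambda>h. energy_vars a \<bullet> h)) (at (fst a))"
proof -
  obtain r m e \<phi> where a: "a = ((r, m, e), \<phi>)"
    by (metis prod.exhaust)
  have "r \<noteq> 0"
    using assms by (simp add: a rho_def)
  then have "((\<lambda>x. snd (snd x) + fst x * (fst (snd x) / fst x)\<^sup>2 / 2 + fst x * \<phi>) has_derivative
      (\<lambda>h. (\<phi> - (m / r)\<^sup>2 / 2, m / r, 1) \<bullet> h)) (at (r, m, e))"
    by (auto intro!: derivative_eq_intros) (auto intro!: ext simp: field_simps power2_eq_square)
  then show ?thesis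
    by (simp add: a U_tot_def energy_vars_def vel_def rho_def mom_def ien_def pot_def)
qed

lemma energy_vars_flux_balance:
  "energy_vars a \<bullet> left_cell_flux \<gamma> f_rho (f_mom \<gamma>) (f_ien \<gamma>) (\<lambda>a b. logmean (rho a) (rho b)) v_num a b
     - pres \<gamma> a * vel a
   = energy_vars b \<bullet> right_cell_flux \<gamma> f_rho (f_mom \<gamma>) (f_ien \<gamma>) (\<lambda>a b. logmean (rho a) (rho b)) v_num a b
     - pres \<gamma> b * vel b"
  by (simp add: energy_vars_def left_cell_flux_def right_cell_flux_def f_mom_def f_rho_def v_num_def
      amean_def field_simps power2_eq_square)

lemma energy_vars_inner_physical_flux:
  assumes "\<gamma> \<noteq> 1" "admissible \<gamma> a"
  shows "energy_vars a \<bullet> left_cell_flux \<gamma> f_rho (f_mom \<gamma>) (f_ien \<gamma>) rnum v_num a a - pres \<gamma> a * vel a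
    = F_tot \<gamma> a"
  using assms
  by (simp add: left_cell_flux_diag energy_vars_def F_tot_def U_tot_def field_simps power2_eq_square)

theorem mainTheorem12:
  fixes \<gamma> dx :: real and rnum :: "cstate \<Rightarrow> cstate \<Rightarrow> real"
  assumes "\<gamma> > 1" and "dx > 0"
    and "\<forall>u. admissible \<gamma> u \<longrightarrow> rnum u u = rho u"
  shows "entropy_conservative \<gamma> dx
           (semidisc \<gamma> dx f_rho (f_mom \<gamma>) (f_ien \<gamma>) rnum v_num) (U_ent \<gamma>) (F_ent \<gamma>)
       \<and> (rnum = (\<lambda>a b. logmean (rho a) (rho b)) \<longrightarrow>
           entropy_conservative \<gamma> dx
             (semidisc \<gamma> dx f_rho (f_mom \<gamma>) (f_ien \<gamma>) rnum v_num) U_tot (F_tot \<gamma>))"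
proof (intro conjI impI)
  have "\<gamma> \<noteq> 1"
    using assms(1) by simp
  then show "entropy_conservative \<gamma> dx
      (semidisc \<gamma> dx f_rho (f_mom \<gamma>) (f_ien \<gamma>) rnum v_num) (U_ent \<gamma>) (F_ent \<gamma>)"
    by (intro entropy_conservativeI[where w = "entropy_vars \<gamma>" and \<psi> = "\<lambda>_. 0"])
      (auto intro: U_ent_has_derivative entropy_vars_flux_balance entropy_vars_inner_physical_flux)
  assume "rnum = (\<lambda>a b. logmean (rho a) (rho b))"
  with \<open>\<gamma> \<noteq> 1\<close> show "entropy_conservative \<gamma> dx
      (semidisc \<gamma> dx f_rho (f_mom \<gamma>) (f_ien \<gamma>) rnum v_num) U_tot (F_tot \<gamma>)"
    by (intro entropy_conservativeI[where w = energy_vars and \<psi> = "\<lambda>a. pres \<gamma> a * vel a"])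
      (auto simp: admissible_def
        intro: U_tot_has_derivative energy_vars_flux_balance energy_vars_inner_physical_flux)
qed

end
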